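(* Let $(A,\succ,\prec)$ be a Leibniz-dendriform algebra with associated Leibniz algebra $(A,\circ)$ and let $r\in A\otimes A$ be such that $r+\tau(r)$ is invariant. The following are equivalent: (a) $r$ satisfies $S(r)=0$; (b) $(A^*,\circ_r)$ is a Leibniz algebra and both $T_r$ and $-T_{\tau(r)}$ are Leibniz algebra homomorphisms from $(A^*,\circ_r)$ to $(A,\circ)$; (c) $(A^*,\succ_r,\prec_r)$ is a Leibniz-dendriform algebra and both $T_r$ and $-T_{\tau(r)}$ are Leibniz-dendriform algebra homomorphisms from $(A^*,\succ_r,\prec_r)$ to $(A,\succ,\prec)$.
   Context: $\langle\cdot,\cdot\rangle$ is the natural pairing, $I$ the identity, $\tau(a\otimes b)=b\otimes a$. A Leibniz algebra is a vector space with bilinear $\circ$ such that $x\circ(y\circ z)=(x\circ y)\circ z+y\circ(x\circ z)$. A Leibniz-dendriform algebra is a vector space $A$ with bilinear operations $\succ,\prec$ such that, with $x\circ y:=x\succ y+x\prec y$, for all $x,y,z$: $(x\circ y)\succ z=x\succ(y\succ z)-y\succ(x\succ z)$, $y\prec(x\circ z)+(x\succ y)\prec z=x\succ(y\prec z)$, $x\prec(y\circ z)=(x\prec y)\prec z+y\succ(x\prec z)$. Write $x\odot y:=x\succ y+y\prec x$, $x\star y:=x\circ y+y\circ x$; $L_*(x)y=x*y$, $R_*(x)y=y*x$; $L_\odot:=L_\succ+R_\prec$, $R_\odot:=R_\succ+L_\prec$, $L_\star:=L_\circ+R_\circ$; for $f:A\to\mathrm{End}(A)$, $f^*:A\to\mathrm{End}(A^*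 )$ is $\langle f^*(x)\xi,v\rangle=-\langle\xi,f(x)v\rangle$. For $r=\sum_ia_i\otimes b_i$, $T_r:A^*\to A$ is $\langle T_r(\zeta),\eta\rangle=\langle r,\zeta\otimes\eta\rangle$, and $S(r):=\sum_{i,j}\big(a_i\otimes a_j\otimes (b_j\circ b_i)-a_i\otimes (b_i\odot a_j)\otimes b_j-(a_i\succ a_j)\otimes b_i\otimes b_j\big)$. An element $s\in A\otimes A$ is invariant if for all $x$: $(L_\odot(x)\otimes I-I\otimes R_\circ(x))s=0$ and $(L_\star(x)\otimes I-I\otimes R_\prec(x))\tau(s)=0$. The operations on $A^*$ (the duals of $\Delta_{\succ,r}(x)=(L_\odot(x)\otimes I-I\otimes R_\circ(x))r$ and $\Delta_{\prec,r}(x)=(L_\star(x)\otimes I-I\otimes R_\prec(x))\tau(r)$) are $\zeta\succ_r\eta=L_\circ^*(T_r(\zeta))\eta-R_\odot^*(T_{\tau(r)}(\eta))\zeta$, $\zeta\prec_r\eta=L_\prec^*(T_{\tau(r)}(\zeta))\eta-L_\star^*(T_r(\eta))\zeta$, and $\zeta\circ_r\eta=\zeta\succ_r\eta+\zeta\prec_r\eta$. *)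

theory Defs
  imports Main
begin

text \<open>Finite-dimensional vector space A over a field 'a, in coordinates with respect to a
basis indexed by the finite type 'i: vectors of A are functions 'i => 'a.
Elements of A* are written in the dual basis (also 'i => 'a), elements of A (x) A
as coefficient matrices 'i => 'i => 'a, elements of A (x) A (x) A as 'i => 'i => 'i => 'a.\<close>

type_synonym ('i,'a) vect = "'i \<Rightarrow> 'a"
type_synonym ('i,'a) op2 = "('i,'a) vect \<Rightarrow> ('i,'a) vect \<Rightarrow> ('i,'a) vect"

definition unitv :: "'i \<Rightarrow> ('i,'a::field) vect" where
  "unitv k = (\<lambda>i. if i = k then 1 else 0)"

definition bil :: "('i \<Rightarrow> 'i \<Rightarrow> 'i \<Rightarrow> 'a::field) \<Rightarrow> ('i::finite,'a) op2" where
  "bil c x y = (\<lambda>k. \<Sum>i\<in>UNIV. \<Sum>j\<in>UNIV. x i * y j * c i j k)"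

definition pairing :: "('i::finite,'a::field) vect \<Rightarrow> ('i,'a) vect \<Rightarrow> 'a" where
  "pairing \<xi> v = (\<Sum>i\<in>UNIV. \<xi> i * v i)"

definition opsum :: "('i,'a::field) op2 \<Rightarrow> ('i,'a) op2 \<Rightarrow> ('i,'a) op2" where
  "opsum f g x y = (\<lambda>k. f x y k + g x y k)"

definition leibniz :: "('i,'a::field) op2 \<Rightarrow> bool" where
  "leibniz m \<longleftrightarrow> (\<forall>x y z. m x (m y z) = (\<lambda>k. m (m x y) z k + m y (m x z) k))"

definition leib_dend :: "('i,'a::field) op2 \<Rightarrow> ('i,'a) op2 \<Rightarrow> bool" where
  "leib_dend sc pc \<longleftrightarrow>
     (\<forall>x y z. sc (opsum sc pc x y) z = (\<lambda>k. sc x (sc y z) k - sc y (sc x z) k)) \<and>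
     (\<forall>x y z. (\<lambda>k. pc y (opsum sc pc x z) k + pc (sc x y) z k) = sc x (pc y z)) \<and>
     (\<forall>x y z. pc x (opsum sc pc y z) = (\<lambda>k. pc (pc x y) z k + sc y (pc x z) k))"

text \<open>Dual representation: for F = f(x) in End(A), the map f^*(x) on A*:
  <f^*(x) xi, v> = - <xi, f(x) v>.\<close>
definition dualop :: "(('i::finite,'a::field) vect \<Rightarrow> ('i,'a) vect) \<Rightarrow> ('i,'a) vect \<Rightarrow> ('i,'a) vect" where
  "dualop F \<xi> = (\<lambda>k. - pairing \<xi> (F (unitv k)))"

definition tau :: "('i \<Rightarrow> 'i \<Rightarrow> 'a) \<Rightarrow> ('i \<Rightarrow> 'i \<Rightarrow> 'a)" where
  "tau r = (\<lambda>p q. r q p)"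

text \<open>T_r : A* -> A,  <T_r zeta, eta> = <r, zeta (x) eta>.\<close>
definition Tr :: "('i::finite \<Rightarrow> 'i \<Rightarrow> 'a::field) \<Rightarrow> ('i,'a) vect \<Rightarrow> ('i,'a) vect" where
  "Tr r \<zeta> = (\<lambda>q. \<Sum>p\<in>UNIV. \<zeta> p * r p q)"

text \<open>(F (x) I) s and (I (x) G) s for s in A (x) A.\<close>
definition tl_map :: "(('i::finite,'a::field) vect \<Rightarrow> ('i,'a) vect) \<Rightarrow> ('i \<Rightarrow> 'i \<Rightarrow> 'a) \<Rightarrow> ('i \<Rightarrow> 'i \<Rightarrow> 'a)" where
  "tl_map F s = (\<lambda>\<alpha> \<beta>. \<Sum>p\<in>UNIV. s p \<beta> * F (unitv p) \<alpha>)"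

definition tr_map :: "(('i::finite,'a::field) vect \<Rightarrow> ('i,'a) vect) \<Rightarrow> ('i \<Rightarrow> 'i \<Rightarrow> 'a) \<Rightarrow> ('i \<Rightarrow> 'i \<Rightarrow> 'a)" where
  "tr_map G s = (\<lambda>\<alpha> \<beta>. \<Sum>q\<in>UNIV. s \<alpha> q * G (unitv q) \<beta>)"

definition L_odot :: "('i,'a::field) op2 \<Rightarrow> ('i,'a) op2 \<Rightarrow> ('i,'a) op2" where
  "L_odot sc pc x y = (\<lambda>k. sc x y k + pc y x k)"

definition R_odot :: "('i,'a::field) op2 \<Rightarrow> ('i,'a) op2 \<Rightarrow> ('i,'a) op2" where
  "R_odot sc pc x y = (\<lambda>k. sc y x k + pc x y k)"

definition L_star :: "('i,'a::field) op2 \<Rightarrow> ('i,'a) op2 \<Rightarrow> ('i,'a) op2" where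
  "L_star sc pc x y = (\<lambda>k. opsum sc pc x y k + opsum sc pc y x k)"

definition Rmul :: "('i,'a) op2 \<Rightarrow> ('i,'a) op2" where
  "Rmul m x y = m y x"

definition invariant :: "('i::finite,'a::field) op2 \<Rightarrow> ('i,'a) op2 \<Rightarrow> ('i \<Rightarrow> 'i \<Rightarrow> 'a) \<Rightarrow> bool" where
  "invariant sc pc s \<longleftrightarrow>
     (\<forall>x. tl_map (L_odot sc pc x) s = tr_map (Rmul (opsum sc pc) x) s) \<and>
     (\<forall>x. tl_map (L_star sc pc x) (tau s) = tr_map (Rmul pc x) (tau s))"

definition succ_r :: "('i::finite,'a::field) op2 \<Rightarrow> ('i,'a) op2 \<Rightarrow> ('i \<Rightarrow> 'i \<Rightarrow> 'a) \<Rightarrow> ('i,'a) op2" where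
  "succ_r sc pc r \<zeta> \<eta> =
     (\<lambda>k. dualop (opsum sc pc (Tr r \<zeta>)) \<eta> k - dualop (R_odot sc pc (Tr (tau r) \<eta>)) \<zeta> k)"

definition prec_r :: "('i::finite,'a::field) op2 \<Rightarrow> ('i,'a) op2 \<Rightarrow> ('i \<Rightarrow> 'i \<Rightarrow> 'a) \<Rightarrow> ('i,'a) op2" where
  "prec_r sc pc r \<zeta> \<eta> =
     (\<lambda>k. dualop (pc (Tr (tau r) \<zeta>)) \<eta> k - dualop (L_star sc pc (Tr r \<eta>)) \<zeta> k)"

text \<open>S(r) in A (x) A (x) A, in coordinates: with r = sum r p q e_p (x) e_q,
  S(r) = sum r_pq r_st ( e_p (x) e_s (x) (e_t o e_q) - e_p (x) (e_q odot e_s) (x) e_t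
                          - (e_p > e_s) (x) e_q (x) e_t ),  where x odot y = x > y + y < x.\<close>
definition S_tensor :: "('i::finite,'a::field) op2 \<Rightarrow> ('i,'a) op2 \<Rightarrow> ('i \<Rightarrow> 'i \<Rightarrow> 'a) \<Rightarrow> ('i \<Rightarrow> 'i \<Rightarrow> 'i \<Rightarrow> 'a)" where
  "S_tensor sc pc r = (\<lambda>\<alpha> \<beta> \<gamma>.
      (\<Sum>q\<in>UNIV. \<Sum>t\<in>UNIV. r \<alpha> q * r \<beta> t * opsum sc pc (unitv t) (unitv q) \<gamma>)
    - (\<Sum>q\<in>UNIV. \<Sum>s\<in>UNIV. r \<alpha> q * r s \<gamma> * L_odot sc pc (unitv q) (unitv s) \<beta>)
    - (\<Sum>p\<in>UNIV. \<Sum>s\<in>UNIV. r p \<beta> * r s \<gamma> * sc (unitv p) (unitv s) \<alpha>))"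

end

(*
  Write T = T_r, U = -T_\<tau>(r) and T_s = T - U for the map of the symmetric tensor s = r + \<tau>(r).
  With the actions \<lambda>\<^sub>\<succ>, \<rho>\<^sub>\<succ>, \<lambda>\<^sub>\<prec>, \<rho>\<^sub>\<prec> of the coregular bimodule of A on A*, the dual products have
  the "mixed" form
    \<zeta> \<succ>_r \<eta> = \<lambda>\<^sub>\<succ>(U \<zeta>) \<eta> + \<rho>\<^sub>\<succ>(T \<eta>) \<zeta>,    \<zeta> \<prec>_r \<eta> = \<lambda>\<^sub>\<prec>(U \<zeta>) \<eta> + \<rho>\<^sub>\<prec>(T \<eta>) \<zeta>
  (for \<succ>_r this already uses the invariance of s). Invariance of s also says that
  \<lambda>(T_s \<zeta>) \<eta> = \<rho>(T_s \<eta>) \<zeta> and that T_s intertwines the right coregular actions with right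
  multiplication in A.
  Pairing with S(r) shows that the defects of T and U as homomorphisms are linear combinations of
  values of S(r), and conversely that S(r) is a combination of the defects of T for \<circ>; this gives
  (a) \<Longrightarrow> (T and U are homomorphisms) and (b) \<Longrightarrow> (a). If T and U are homomorphisms, the mixed form
  splits each Leibniz-dendriform axiom of (A*, \<succ>_r, \<prec>_r) into the three corresponding axioms
  of the semidirect product A \<ltimes> A* plus a remainder \<lambda>(T_s \<eta>) (\<rho>(x) \<zeta>) - \<rho>(T_s \<zeta> * x) \<eta>, which
  vanishes by invariance. So (a) \<Longrightarrow> (c), and (c) \<Longrightarrow> (b) is formal.
*)

theory Submission
  imports Defs "HOL-Library.Function_Algebras"
begin

section \<open>Linear algebra in coordinates\<close>

lemma bil_apply: "bil c x y k = (\<Sum>i\<in>UNIV. \<Sum>j\<in>UNIV. x i * y j * c i j k)"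
  by (simp add: bil_def)

lemma bil_add_left: "bil c (x + y) z = bil c x z + bil c y z"
  by (rule ext) (simp add: bil_def algebra_simps sum.distrib)
lemma bil_add_right: "bil c z (x + y) = bil c z x + bil c z y"
  by (rule ext) (simp add: bil_def algebra_simps sum.distrib)
lemma bil_diff_left: "bil c (x - y) z = bil c x z - bil c y z"
  by (rule ext) (simp add: bil_def algebra_simps sum_subtractf)
lemma bil_diff_right: "bil c z (x - y) = bil c z x - bil c z y"
  by (rule ext) (simp add: bil_def algebra_simps sum_subtractf)
lemma bil_minus_left: "bil c (- x) z = - bil c x z"
  by (rule ext) (simp add: bil_def sum_negf)
lemma bil_minus_right: "bil c z (- x) = - bil c z x"
  by (rule ext) (simp add: bil_def sum_negf)

lemmas bil_linear = bil_add_left bil_add_right bil_diff_left bil_diff_right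
  bil_minus_left bil_minus_right

lemma pairing_add_left: "pairing (x + y) z = pairing x z + pairing y z"
  by (simp add: pairing_def algebra_simps sum.distrib)
lemma pairing_add_right: "pairing z (x + y) = pairing z x + pairing z y"
  by (simp add: pairing_def algebra_simps sum.distrib)
lemma pairing_diff_left: "pairing (x - y) z = pairing x z - pairing y z"
  by (simp add: pairing_def algebra_simps sum_subtractf)
lemma pairing_diff_right: "pairing z (x - y) = pairing z x - pairing z y"
  by (simp add: pairing_def algebra_simps sum_subtractf)
lemma pairing_minus_left: "pairing (- x) z = - pairing x z"
  by (simp add: pairing_def sum_negf)
lemma pairing_minus_right: "pairing z (- x) = - pairing z x"
  by (simp add: pairing_def sum_negf)

lemma pairing_zero_right [simp]: "pairing z 0 = 0"
  by (simp add: pairing_def)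

lemmas pairing_linear = pairing_add_left pairing_add_right pairing_diff_left pairing_diff_right
  pairing_minus_left pairing_minus_right

lemma Tr_add: "Tr r (x + y) = Tr r x + Tr r y"
  by (rule ext) (simp add: Tr_def algebra_simps sum.distrib)

lemma pairing_unitv_left: "pairing (unitv k) w = w k"
proof -
  have "(\<Sum>i\<in>UNIV. unitv k i * w i) = (\<Sum>i\<in>UNIV. if i = k then w i else 0)"
    by (rule sum.cong) (auto simp: unitv_def)
  then show ?thesis by (simp add: pairing_def)
qed

lemma pairing_unitv_right: "pairing w (unitv k) = w k"
proof -
  have "(\<Sum>i\<in>UNIV. w i * unitv k i) = (\<Sum>i\<in>UNIV. if i = k then w i else 0)"
    by (rule sum.cong) (auto simp: unitv_def)
  then show ?thesis by (simp add: pairing_def)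
qed

lemma covector_eqI: "(\<And>v. pairing a v = pairing b v) \<Longrightarrow> a = b"
  by (rule ext) (metis pairing_unitv_right)
lemma vector_eqI: "(\<And>\<xi>. pairing \<xi> a = pairing \<xi> b) \<Longrightarrow> a = b"
  by (rule ext) (metis pairing_unitv_left)

lemma tau_tau [simp]: "tau (tau r) = r"
  by (simp add: tau_def)

lemma pairing_Tr: "pairing \<xi> (Tr r \<zeta>) = pairing \<zeta> (Tr (tau r) \<xi>)"
  unfolding pairing_def Tr_def tau_def
  by (simp add: sum_distrib_left sum_distrib_right algebra_simps) (rule sum.swap)

lemma sum_fun_apply: "(\<Sum>a\<in>A. g a) x = (\<Sum>a\<in>A. g a x)"
  by (induction A rule: infinite_finite_induct) auto

lemma linear_functional_eq_zero:
  fixes f :: "('i::finite,'a::field) vect \<Rightarrow> 'a"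
  assumes add: "\<And>x y. f (x + y) = f x + f y"
    and scale: "\<And>c x. f (\<lambda>i. c * x i) = c * f x"
    and unitv: "\<And>k. f (unitv k) = 0"
  shows "f \<zeta> = 0"
proof -
  have "f 0 = f 0 + f 0"
    using add[of 0 0] by (simp only: add_0_left)
  then have f0: "f 0 = 0"
    by (simp only: add_cancel_right_right)
  have partial_sums: "f (\<Sum>k\<in>A. (\<lambda>i. \<zeta> k * unitv k i)) = 0" if "finite A" for A
    using that
  proof (induction A rule: finite_induct)
    case empty
    show ?case
      by (simp only: sum.empty f0)
  next
    case (insert k A)
    show ?case
      by (simp only: sum.insert[OF insert.hyps] add scale unitv insert.IH mult_zero_right add_0)
  qed
  have "(\<Sum>k\<in>UNIV. (\<lambda>i. \<zeta> k * unitv k i)) = \<zeta>"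
  proof
    fix i
    have "(\<Sum>k\<in>UNIV. \<zeta> k * unitv k i) = (\<Sum>k\<in>UNIV. if i = k then \<zeta> k else 0)"
      by (rule sum.cong) (auto simp: unitv_def)
    then show "(\<Sum>k\<in>UNIV. (\<lambda>i. \<zeta> k * unitv k i)) i = \<zeta> i"
      by (simp add: sum_fun_apply)
  qed
  then show ?thesis
    using partial_sums[of UNIV] by simp
qed

lemma bil_scale_left: "bil c (\<lambda>i. a * x i) y = (\<lambda>k. a * bil c x y k)"
  by (rule ext) (simp add: bil_def sum_distrib_left mult_ac)
lemma bil_scale_right: "bil c x (\<lambda>i. a * y i) = (\<lambda>k. a * bil c x y k)"
  by (rule ext) (simp add: bil_def sum_distrib_left mult_ac)
lemma pairing_scale_left: "pairing (\<lambda>i. a * x i) y = a * pairing x y"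
  by (simp add: pairing_def sum_distrib_left mult_ac)
lemma pairing_scale_right: "pairing x (\<lambda>i. a * y i) = a * pairing x y"
  by (simp add: pairing_def sum_distrib_left mult_ac)
lemma Tr_scale: "Tr r (\<lambda>i. a * x i) = (\<lambda>k. a * Tr r x k)"
  by (rule ext) (simp add: Tr_def sum_distrib_left mult_ac)

lemmas scale_simps = bil_scale_left bil_scale_right pairing_scale_left pairing_scale_right Tr_scale

definition coord_linear :: "(('i::finite,'a::field) vect \<Rightarrow> ('i,'a) vect) \<Rightarrow> bool" where
  "coord_linear F \<longleftrightarrow> (\<forall>w. F w = (\<lambda>j. \<Sum>k\<in>UNIV. w k * F (unitv k) j))"

lemma bil_unitv_right: "bil c x (unitv k) j = (\<Sum>i\<in>UNIV. x i * c i k j)"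
proof -
  have "(\<Sum>l\<in>UNIV. x i * unitv k l * c i l j) = x i * c i k j" for i
  proof -
    have "(\<Sum>l\<in>UNIV. x i * unitv k l * c i l j) = (\<Sum>l\<in>UNIV. if l = k then x i * c i l j else 0)"
      by (rule sum.cong) (auto simp: unitv_def)
    then show ?thesis by simp
  qed
  then show ?thesis by (simp add: bil_def)
qed

lemma bil_unitv_left: "bil c (unitv k) y j = (\<Sum>l\<in>UNIV. y l * c k l j)"
proof -
  have "(\<Sum>l\<in>UNIV. unitv k i * y l * c i l j) = (if i = k then (\<Sum>l\<in>UNIV. y l * c k l j) else 0)"
    for i
    by (simp add: unitv_def)
  then show ?thesis by (simp add: bil_def)
qed

lemma coord_linear_bil_right: "coord_linear (bil c x)"
  unfolding coord_linear_def
proof (intro allI ext)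
  fix w j
  have "(\<Sum>k\<in>UNIV. w k * bil c x (unitv k) j) = (\<Sum>k\<in>UNIV. \<Sum>i\<in>UNIV. x i * w k * c i k j)"
    by (simp add: bil_unitv_right sum_distrib_left mult_ac)
  also have "\<dots> = (\<Sum>i\<in>UNIV. \<Sum>k\<in>UNIV. x i * w k * c i k j)"
    by (rule sum.swap)
  finally show "bil c x w j = (\<Sum>k\<in>UNIV. w k * bil c x (unitv k) j)"
    by (simp add: bil_def)
qed

lemma coord_linear_bil_left: "coord_linear (\<lambda>w. bil c w y)"
  unfolding coord_linear_def
proof (intro allI ext)
  fix w j
  have "(\<Sum>k\<in>UNIV. w k * bil c (unitv k) y j) = (\<Sum>k\<in>UNIV. \<Sum>l\<in>UNIV. w k * y l * c k l j)"
    by (simp add: bil_unitv_left sum_distrib_left mult_ac)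
  then show "bil c w y j = (\<Sum>k\<in>UNIV. w k * bil c (unitv k) y j)"
    by (simp add: bil_def)
qed

lemma coord_linear_add:
  assumes "coord_linear F" and "coord_linear G"
  shows "coord_linear (\<lambda>w. F w + G w)"
  unfolding coord_linear_def
proof (intro allI ext)
  fix w j
  have "F w j = (\<Sum>k\<in>UNIV. w k * F (unitv k) j)" and "G w j = (\<Sum>k\<in>UNIV. w k * G (unitv k) j)"
    using assms unfolding coord_linear_def by metis+
  then show "(F w + G w) j = (\<Sum>k\<in>UNIV. w k * (F (unitv k) + G (unitv k)) j)"
    by (simp add: algebra_simps sum.distrib)
qed

lemma pairing_coord_linear:
  assumes "coord_linear F"
  shows "pairing \<xi> (F w) = (\<Sum>k\<in>UNIV. w k * pairing \<xi> (F (unitv k)))"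
proof -
  have "pairing \<xi> (F w) = (\<Sum>j\<in>UNIV. \<xi> j * (\<Sum>k\<in>UNIV. w k * F (unitv k) j))"
    using assms unfolding coord_linear_def pairing_def by metis
  also have "\<dots> = (\<Sum>k\<in>UNIV. w k * (\<Sum>j\<in>UNIV. \<xi> j * F (unitv k) j))"
    by (simp add: sum_distrib_left algebra_simps) (rule sum.swap)
  finally show ?thesis
    by (simp add: pairing_def)
qed

lemma pairing_dualop:
  assumes "coord_linear F"
  shows "pairing (dualop F \<xi>) w = - pairing \<xi> (F w)"
proof -
  have "pairing (dualop F \<xi>) w = - (\<Sum>k\<in>UNIV. w k * pairing \<xi> (F (unitv k)))"
    unfolding dualop_def pairing_def[of "\<lambda>k. - pairing \<xi> (F (unitv k))"]
    by (simp add: sum_negf mult.commute)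
  also have "\<dots> = - pairing \<xi> (F w)"
    using pairing_coord_linear[OF assms, of \<xi> w] by simp
  finally show ?thesis .
qed

lemma opsum_eq_plus: "opsum f g x y = f x y + g x y"
  by (simp add: opsum_def plus_fun_def)

lemma leibniz_opsum:
  fixes f g :: "('i,'a::field) op2"
  assumes ld: "leib_dend f g"
    and f_add: "\<And>x y z. f x (y + z) = f x y + f x z"
    and g_add: "\<And>x y z. g (x + y) z = g x z + g y z"
  shows "leibniz (opsum f g)"
  unfolding leibniz_def
proof (intro allI)
  fix x y z
  note circ = opsum_eq_plus[of f g]
  have ld1: "f (f x y + g x y) z = f x (f y z) - f y (f x z)"
    using ld unfolding leib_dend_def circ fun_diff_def by metis
  have ld2: "g y (f x z + g x z) + g (f x y) z = f x (g y z)"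
    using ld unfolding leib_dend_def circ plus_fun_def by metis
  have ld3: "g x (f y z + g y z) = g (g x y) z + f y (g x z)"
    using ld unfolding leib_dend_def circ plus_fun_def by metis
  have "opsum f g x (opsum f g y z) = opsum f g (opsum f g x y) z + opsum f g y (opsum f g x z)"
    unfolding circ f_add g_add ld1 ld3 using ld2 by (simp add: algebra_simps)
  then show "opsum f g x (opsum f g y z)
      = (\<lambda>k. opsum f g (opsum f g x y) z k + opsum f g y (opsum f g x z) k)"
    by (simp only: plus_fun_def)
qed

definition tensor_pairing ::
    "('i::finite \<Rightarrow> 'i \<Rightarrow> 'a::field) \<Rightarrow> ('i,'a) vect \<Rightarrow> ('i,'a) vect \<Rightarrow> 'a" where
  "tensor_pairing t a b = (\<Sum>i\<in>UNIV. \<Sum>j\<in>UNIV. a i * b j * t i j)"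

lemma tensor_pairing_tl_map:
  assumes "coord_linear F"
  shows "tensor_pairing (tl_map F s) a b = pairing a (F (Tr (tau s) b))"
proof -
  have "F (Tr (tau s) b) = (\<lambda>j. \<Sum>k\<in>UNIV. Tr (tau s) b k * F (unitv k) j)"
    using assms unfolding coord_linear_def by metis
  then have "pairing a (F (Tr (tau s) b))
      = (\<Sum>i\<in>UNIV. a i * (\<Sum>k\<in>UNIV. (\<Sum>j\<in>UNIV. b j * s k j) * F (unitv k) i))"
    by (simp add: pairing_def Tr_def tau_def)
  also have "\<dots> = (\<Sum>i\<in>UNIV. \<Sum>k\<in>UNIV. \<Sum>j\<in>UNIV. a i * b j * s k j * F (unitv k) i)"
    by (simp add: sum_distrib_left sum_distrib_right mult_ac)
  also have "\<dots> = (\<Sum>i\<in>UNIV. \<Sum>j\<in>UNIV. \<Sum>k\<in>UNIV. a i * b j * s k j * F (unitv k) i)"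
    by (rule sum.cong[OF refl]) (rule sum.swap)
  finally show ?thesis
    by (simp add: tensor_pairing_def tl_map_def sum_distrib_left mult_ac)
qed

lemma tensor_pairing_tr_map:
  assumes "coord_linear G"
  shows "tensor_pairing (tr_map G s) a b = pairing b (G (Tr s a))"
proof -
  have "G (Tr s a) = (\<lambda>j. \<Sum>k\<in>UNIV. Tr s a k * G (unitv k) j)"
    using assms unfolding coord_linear_def by metis
  then have "pairing b (G (Tr s a))
      = (\<Sum>j\<in>UNIV. b j * (\<Sum>k\<in>UNIV. (\<Sum>i\<in>UNIV. a i * s i k) * G (unitv k) j))"
    by (simp add: pairing_def Tr_def)
  also have "\<dots> = (\<Sum>j\<in>UNIV. \<Sum>k\<in>UNIV. \<Sum>i\<in>UNIV. a i * b j * s i k * G (unitv k) j)"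
    by (simp add: sum_distrib_left sum_distrib_right mult_ac)
  also have "\<dots> = (\<Sum>j\<in>UNIV. \<Sum>i\<in>UNIV. \<Sum>k\<in>UNIV. a i * b j * s i k * G (unitv k) j)"
    by (rule sum.cong[OF refl]) (rule sum.swap)
  also have "\<dots> = (\<Sum>i\<in>UNIV. \<Sum>j\<in>UNIV. \<Sum>k\<in>UNIV. a i * b j * s i k * G (unitv k) j)"
    by (rule sum.swap)
  finally show ?thesis
    by (simp add: tensor_pairing_def tr_map_def sum_distrib_left mult_ac)
qed

section \<open>The coregular bimodule\<close>

locale coord_algebra =
  fixes cs cp :: "'i::finite \<Rightarrow> 'i \<Rightarrow> 'i \<Rightarrow> 'a::field"
begin

abbreviation sc :: "('i,'a) op2" where "sc \<equiv> bil cs"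
abbreviation pc :: "('i,'a) op2" where "pc \<equiv> bil cp"
abbreviation circ :: "('i,'a) op2" where "circ x y \<equiv> sc x y + pc x y"

text \<open>The actions lsucc, rsucc, lprec, rprec of the coregular bimodule of A on A* are
  L_\<circ>^*, R_\<odot>^*, -L_\<prec>^* and -L_\<star>^* in the notation of the paper.\<close>

definition lsucc :: "('i,'a) op2" where "lsucc x = dualop (opsum sc pc x)"
definition rsucc :: "('i,'a) op2" where "rsucc y = dualop (R_odot sc pc y)"
definition lprec :: "('i,'a) op2" where "lprec x \<eta> = - dualop (pc x) \<eta>"
definition rprec :: "('i,'a) op2" where "rprec y \<zeta> = - dualop (L_star sc pc y) \<zeta>"

lemma pairing_lsucc [simp]: "pairing (lsucc x \<gamma>) w = - pairing \<gamma> (circ x w)"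
proof -
  have "opsum sc pc x = (\<lambda>w. circ x w)"
    by (intro ext) (simp add: opsum_def)
  then show ?thesis
    by (simp add: lsucc_def pairing_dualop coord_linear_add coord_linear_bil_right)
qed

lemma pairing_rsucc [simp]: "pairing (rsucc y \<gamma>) w = - pairing \<gamma> (sc w y + pc y w)"
proof -
  have "R_odot sc pc y = (\<lambda>w. sc w y + pc y w)"
    by (intro ext) (simp add: R_odot_def)
  then show ?thesis
    by (simp add: rsucc_def pairing_dualop coord_linear_add coord_linear_bil_right
        coord_linear_bil_left)
qed

lemma pairing_lprec [simp]: "pairing (lprec x \<gamma>) w = pairing \<gamma> (pc x w)"
  by (simp add: lprec_def pairing_minus_left pairing_dualop coord_linear_bil_right)

lemma pairing_rprec [simp]: "pairing (rprec y \<gamma>) w = pairing \<gamma> (circ y w + circ w y)"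
proof -
  have "L_star sc pc y = (\<lambda>w. circ y w + circ w y)"
    by (intro ext) (simp add: L_star_def opsum_def)
  then show ?thesis
    by (simp add: rprec_def pairing_minus_left pairing_dualop coord_linear_add
        coord_linear_bil_right coord_linear_bil_left)
qed

lemma lsucc_linear:
  "lsucc (x + y) \<gamma> = lsucc x \<gamma> + lsucc y \<gamma>" "lsucc (x - y) \<gamma> = lsucc x \<gamma> - lsucc y \<gamma>"
  "lsucc (- x) \<gamma> = - lsucc x \<gamma>" "lsucc x (\<gamma> + \<delta>) = lsucc x \<gamma> + lsucc x \<delta>"
  "lsucc x (\<gamma> - \<delta>) = lsucc x \<gamma> - lsucc x \<delta>" "lsucc x (- \<gamma>) = - lsucc x \<gamma>"
  by (rule covector_eqI; simp add: bil_linear pairing_linear algebra_simps)+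

lemma rsucc_linear:
  "rsucc (x + y) \<gamma> = rsucc x \<gamma> + rsucc y \<gamma>" "rsucc (x - y) \<gamma> = rsucc x \<gamma> - rsucc y \<gamma>"
  "rsucc (- x) \<gamma> = - rsucc x \<gamma>" "rsucc x (\<gamma> + \<delta>) = rsucc x \<gamma> + rsucc x \<delta>"
  "rsucc x (\<gamma> - \<delta>) = rsucc x \<gamma> - rsucc x \<delta>" "rsucc x (- \<gamma>) = - rsucc x \<gamma>"
  by (rule covector_eqI; simp add: bil_linear pairing_linear algebra_simps)+

lemma lprec_linear:
  "lprec (x + y) \<gamma> = lprec x \<gamma> + lprec y \<gamma>" "lprec (x - y) \<gamma> = lprec x \<gamma> - lprec y \<gamma>"
  "lprec (- x) \<gamma> = - lprec x \<gamma>" "lprec x (\<gamma> + \<delta>) = lprec x \<gamma> + lprec x \<delta>"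
  "lprec x (\<gamma> - \<delta>) = lprec x \<gamma> - lprec x \<delta>" "lprec x (- \<gamma>) = - lprec x \<gamma>"
  by (rule covector_eqI; simp add: bil_linear pairing_linear algebra_simps)+

lemma rprec_linear:
  "rprec (x + y) \<gamma> = rprec x \<gamma> + rprec y \<gamma>" "rprec (x - y) \<gamma> = rprec x \<gamma> - rprec y \<gamma>"
  "rprec (- x) \<gamma> = - rprec x \<gamma>" "rprec x (\<gamma> + \<delta>) = rprec x \<gamma> + rprec x \<delta>"
  "rprec x (\<gamma> - \<delta>) = rprec x \<gamma> - rprec x \<delta>" "rprec x (- \<gamma>) = - rprec x \<gamma>"
  by (rule covector_eqI; simp add: bil_linear pairing_linear algebra_simps)+

lemmas actions_linear = lsucc_linear rsucc_linear lprec_linear rprec_linear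

end

locale ld_algebra = coord_algebra +
  assumes leib_dend: "leib_dend sc pc"
begin

text \<open>The lemma coreg_ldN_first (second, third) is the N-th Leibniz-dendriform axiom of the
  semidirect product A \<ltimes> A*, with A acting on A* by the coregular actions, in the case that its
  first (second, third) argument lies in A* and the other two lie in A.\<close>

lemma ld1: "sc (circ x y) z = sc x (sc y z) - sc y (sc x z)"
  using leib_dend unfolding leib_dend_def opsum_def plus_fun_def fun_diff_def by metis

lemma ld2: "sc x (pc y z) = pc y (circ x z) + pc (sc x y) z"
  using leib_dend unfolding leib_dend_def opsum_def plus_fun_def by metis

lemma ld3: "pc x (circ y z) = pc (pc x y) z + sc y (pc x z)"
  using leib_dend unfolding leib_dend_def opsum_def plus_fun_def by metis

lemma circ_leibniz: "circ x (circ y z) = circ (circ x y) z + circ y (circ x z)"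
  using leibniz_opsum[OF leib_dend bil_add_right bil_add_left]
  unfolding leibniz_def opsum_def plus_fun_def by metis

lemma prec_odot_zero: "pc (sc x y + pc y x) z = 0"
  using ld2[of x y z] ld3[of y x z] by (simp add: bil_add_left algebra_simps)

lemma coreg_ld1_first:
  "rsucc z (rsucc y \<gamma> + rprec y \<gamma>) = rsucc (sc y z) \<gamma> - lsucc y (rsucc z \<gamma>)" (is "?L = ?R")
proof (rule covector_eqI)
  fix v
  note instances = ld2[of y z v] ld1[of y v z] prec_odot_zero[of v z y]
  show "pairing ?L v = pairing ?R v"
    using instances [THEN arg_cong [where f = "pairing \<gamma>"]]
    by (simp (no_asm_use) add: bil_linear pairing_linear) algebra
qed

lemma coreg_ld1_second:
  "rsucc z (lsucc x \<gamma> + lprec x \<gamma>) = lsucc x (rsucc z \<gamma>) - rsucc (sc x z) \<gamma>" (is "?L = ?R")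
proof (rule covector_eqI)
  fix v
  note instances = ld2[of x z v] ld1[of x v z]
  show "pairing ?L v = pairing ?R v"
    using instances [THEN arg_cong [where f = "pairing \<gamma>"]]
    by (simp (no_asm_use) add: bil_linear pairing_linear) algebra
qed

lemma coreg_ld1_third:
  "lsucc (circ x y) \<gamma> = lsucc x (lsucc y \<gamma>) - lsucc y (lsucc x \<gamma>)" (is "?L = ?R")
proof (rule covector_eqI)
  fix v
  note instances = circ_leibniz[of x y v]
  show "pairing ?L v = pairing ?R v"
    using instances [THEN arg_cong [where f = "pairing \<gamma>"]]
    by (simp (no_asm_use) add: bil_linear pairing_linear) algebra
qed

lemma coreg_ld2_first:
  "rprec (circ x z) \<gamma> + rprec z (lsucc x \<gamma>) = lsucc x (rprec z \<gamma>)" (is "?L = ?R")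
proof (rule covector_eqI)
  fix v
  note instances = circ_leibniz[of x z v] circ_leibniz[of x v z]
  show "pairing ?L v = pairing ?R v"
    using instances [THEN arg_cong [where f = "pairing \<gamma>"]]
    by (simp (no_asm_use) add: bil_linear pairing_linear) algebra
qed

lemma coreg_ld2_second:
  "lprec y (rsucc z \<gamma> + rprec z \<gamma>) + rprec z (rsucc y \<gamma>) = rsucc (pc y z) \<gamma>" (is "?L = ?R")
proof (rule covector_eqI)
  fix v
  note instances = ld3[of y z v] ld3[of y v z] ld1[of z v y] ld1[of v z y]
  show "pairing ?L v = pairing ?R v"
    using instances [THEN arg_cong [where f = "pairing \<gamma>"]]
    by (simp (no_asm_use) add: bil_linear pairing_linear) algebra
qed

lemma coreg_ld2_third:
  "lprec y (lsucc x \<gamma> + lprec x \<gamma>) + lprec (sc x y) \<gamma> = lsucc x (lprec y \<gamma>)" (is "?L = ?R")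
proof (rule covector_eqI)
  fix v
  note instances = ld2[of x y v]
  show "pairing ?L v = pairing ?R v"
    using instances [THEN arg_cong [where f = "pairing \<gamma>"]]
    by (simp (no_asm_use) add: bil_linear pairing_linear) algebra
qed

lemma coreg_ld3_first:
  "rprec (circ y z) \<gamma> = rprec z (rprec y \<gamma>) + lsucc y (rprec z \<gamma>)" (is "?L = ?R")
proof (rule covector_eqI)
  fix v
  note instances =
    circ_leibniz[of y z v] circ_leibniz[of y v z] circ_leibniz[of z v y] circ_leibniz[of v z y]
  show "pairing ?L v = pairing ?R v"
    using instances [THEN arg_cong [where f = "pairing \<gamma>"]]
    by (simp (no_asm_use) add: bil_linear pairing_linear) algebra
qed

lemma coreg_ld3_second:
  "lprec x (rsucc z \<gamma> + rprec z \<gamma>) = rprec z (lprec x \<gamma>) + rsucc (pc x z) \<gamma>" (is "?L = ?R")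
proof (rule covector_eqI)
  fix v
  note instances = ld3[of x z v] ld3[of x v z]
  show "pairing ?L v = pairing ?R v"
    using instances [THEN arg_cong [where f = "pairing \<gamma>"]]
    by (simp (no_asm_use) add: bil_linear pairing_linear) algebra
qed

lemma coreg_ld3_third:
  "lprec x (lsucc y \<gamma> + lprec y \<gamma>) = lprec (pc x y) \<gamma> + lsucc y (lprec x \<gamma>)" (is "?L = ?R")
proof (rule covector_eqI)
  fix v
  note instances = ld3[of x y v]
  show "pairing ?L v = pairing ?R v"
    using instances [THEN arg_cong [where f = "pairing \<gamma>"]]
    by (simp (no_asm_use) add: bil_linear pairing_linear) algebra
qed

end

section \<open>Invariant symmetric tensors\<close>

locale invariant_symmetric = coord_algebra cs cp
  for cs cp :: "'i::finite \<Rightarrow> 'i \<Rightarrow> 'i \<Rightarrow> 'a::field" +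
  fixes s :: "'i \<Rightarrow> 'i \<Rightarrow> 'a"
  assumes invariant: "invariant sc pc s"
    and symmetric: "tau s = s"
begin

abbreviation Ts :: "('i,'a) vect \<Rightarrow> ('i,'a) vect" where "Ts \<equiv> Tr s"

lemma pairing_Ts: "pairing a (Ts b) = pairing b (Ts a)"
  using pairing_Tr[of a s b] by (simp add: symmetric)

lemma invariant_odot: "pairing a (sc x (Ts b) + pc (Ts b) x) = pairing b (circ (Ts a) x)"
proof -
  have "L_odot sc pc x = (\<lambda>w. sc x w + pc w x)" and "Rmul (opsum sc pc) x = (\<lambda>w. circ w x)"
    by (intro ext; simp add: L_odot_def Rmul_def opsum_def)+
  moreover have "tl_map (L_odot sc pc x) s = tr_map (Rmul (opsum sc pc) x) s"
    using invariant unfolding invariant_def by blast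
  ultimately show ?thesis
    using tensor_pairing_tl_map[of "\<lambda>w. sc x w + pc w x" s a b]
      tensor_pairing_tr_map[of "\<lambda>w. circ w x" s a b]
    by (simp add: symmetric coord_linear_add coord_linear_bil_right coord_linear_bil_left)
qed

lemma invariant_star: "pairing a (circ x (Ts b) + circ (Ts b) x) = pairing b (pc (Ts a) x)"
proof -
  have "L_star sc pc x = (\<lambda>w. circ x w + circ w x)" and "Rmul pc x = (\<lambda>w. pc w x)"
    by (intro ext; simp add: L_star_def Rmul_def opsum_def)+
  moreover have "tl_map (L_star sc pc x) s = tr_map (Rmul pc x) s"
    using invariant symmetric unfolding invariant_def by metis
  ultimately show ?thesis
    using tensor_pairing_tl_map[of "\<lambda>w. circ x w + circ w x" s a b]
      tensor_pairing_tr_map[of "\<lambda>w. pc w x" s a b]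
    by (simp add: symmetric coord_linear_add coord_linear_bil_right coord_linear_bil_left)
qed

lemma lsucc_Ts: "lsucc (Ts \<zeta>) \<eta> = rsucc (Ts \<eta>) \<zeta>"
  by (rule covector_eqI) (simp add: invariant_odot)

lemma lprec_Ts: "lprec (Ts \<zeta>) \<eta> = rprec (Ts \<eta>) \<zeta>"
  by (rule covector_eqI) (simp add: invariant_star[symmetric] add.commute)

lemma Ts_rsucc: "Ts (rsucc y \<zeta>) = sc (Ts \<zeta>) y"
proof (rule vector_eqI)
  fix \<xi>
  show "pairing \<xi> (Ts (rsucc y \<zeta>)) = pairing \<xi> (sc (Ts \<zeta>) y)"
    using invariant_odot[of \<zeta> y \<xi>] invariant_star[of \<zeta> y \<xi>]
    by (simp (no_asm_use) add: pairing_Ts[of \<xi>] pairing_linear) algebra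
qed

lemma Ts_rprec: "Ts (rprec y \<zeta>) = pc (Ts \<zeta>) y"
  by (rule vector_eqI) (simp add: pairing_Ts[of _ "rprec y \<zeta>"] invariant_star)

end

section \<open>The dual products defined by r\<close>

locale ld_r_matrix = ld_algebra cs cp
  for cs cp :: "'i::finite \<Rightarrow> 'i \<Rightarrow> 'i \<Rightarrow> 'a::field" +
  fixes r :: "'i \<Rightarrow> 'i \<Rightarrow> 'a"
  assumes invariant_r: "invariant sc pc (\<lambda>p q. r p q + tau r p q)"
begin

sublocale invariant_symmetric cs cp "\<lambda>p q. r p q + tau r p q"
  by unfold_locales (fact invariant_r, simp add: tau_def fun_eq_iff add.commute)

abbreviation T :: "('i,'a) vect \<Rightarrow> ('i,'a) vect" where "T \<equiv> Tr r"
abbreviation U :: "('i,'a) vect \<Rightarrow> ('i,'a) vect" where "U \<zeta> \<equiv> - Tr (tau r) \<zeta>"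
abbreviation dsucc :: "('i,'a) op2" where "dsucc \<equiv> succ_r sc pc r"
abbreviation dprec :: "('i,'a) op2" where "dprec \<equiv> prec_r sc pc r"
abbreviation dcirc :: "('i,'a) op2" where "dcirc \<zeta> \<eta> \<equiv> dsucc \<zeta> \<eta> + dprec \<zeta> \<eta>"

lemma Ts_eq: "Ts \<zeta> = T \<zeta> - U \<zeta>"
  by (rule ext) (simp add: Tr_def algebra_simps sum.distrib)

lemma dsucc_coreg: "dsucc \<zeta> \<eta> = lsucc (T \<zeta>) \<eta> - rsucc (Tr (tau r) \<eta>) \<zeta>"
  by (simp add: succ_r_def lsucc_def rsucc_def fun_eq_iff)

lemma dprec_coreg: "dprec \<zeta> \<eta> = lprec (U \<zeta>) \<eta> + rprec (T \<eta>) \<zeta>"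
  by (simp add: prec_r_def lprec_def rprec_def dualop_def bil_minus_left pairing_minus_right
      fun_eq_iff)

lemma dsucc_coreg_mixed: "dsucc \<zeta> \<eta> = lsucc (U \<zeta>) \<eta> + rsucc (T \<eta>) \<zeta>"
  unfolding dsucc_coreg using lsucc_Ts[of \<zeta> \<eta>]
  by (simp add: Ts_eq actions_linear algebra_simps)

text \<open>The pairing of S(r) with \<zeta> \<otimes> \<eta> \<otimes> \<xi>.\<close>
definition S_form :: "('i,'a) vect \<Rightarrow> ('i,'a) vect \<Rightarrow> ('i,'a) vect \<Rightarrow> 'a" where
  "S_form \<zeta> \<eta> \<xi> = pairing \<xi> (circ (T \<eta>) (T \<zeta>))
     - pairing \<eta> (sc (T \<zeta>) (Tr (tau r) \<xi>) + pc (Tr (tau r) \<xi>) (T \<zeta>))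
     - pairing \<zeta> (sc (Tr (tau r) \<eta>) (Tr (tau r) \<xi>))"

text \<open>As a rewrite rule pairing_Tr loops, so it is only used instantiated to the dual products.\<close>
lemmas pairing_Tr_dual =
  pairing_Tr[of _ r "succ_r sc pc r _ _"] pairing_Tr[of _ r "prec_r sc pc r _ _"]
  pairing_Tr[of _ "tau r" "succ_r sc pc r _ _", simplified]
  pairing_Tr[of _ "tau r" "prec_r sc pc r _ _", simplified]

lemma T_dsucc:
  "pairing \<xi> (T (dsucc \<zeta> \<eta>)) = pairing \<xi> (sc (T \<zeta>) (T \<eta>)) + S_form \<xi> \<zeta> \<eta>"
  unfolding pairing_Tr_dual
  using invariant_star[of \<eta> "T \<zeta>" \<xi>] invariant_odot[of \<xi> "T \<zeta>" \<eta>]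
    invariant_star[of \<zeta> "Tr (tau r) \<eta>" \<xi>] invariant_odot[of \<zeta> "Tr (tau r) \<eta>" \<xi>]
  by (simp (no_asm_use) add: dsucc_coreg S_form_def Ts_eq bil_linear pairing_linear)
    algebra

lemma T_dprec:
  "pairing \<xi> (T (dprec \<zeta> \<eta>)) = pairing \<xi> (pc (T \<zeta>) (T \<eta>)) - S_form \<eta> \<xi> \<zeta> - S_form \<xi> \<eta> \<zeta>"
  unfolding pairing_Tr_dual
  using invariant_star[of \<zeta> "T \<eta>" \<xi>] invariant_star[of \<eta> "Tr (tau r) \<zeta>" \<xi>]
    invariant_odot[of \<eta> "Tr (tau r) \<zeta>" \<xi>]
  by (simp (no_asm_use) add: dprec_coreg S_form_def Ts_eq bil_linear pairing_linear)
    algebra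

lemma U_dsucc:
  "pairing \<xi> (U (dsucc \<zeta> \<eta>)) = pairing \<xi> (sc (U \<zeta>) (U \<eta>)) + S_form \<xi> \<zeta> \<eta>"
  unfolding pairing_minus_right pairing_Tr_dual
  by (simp add: dsucc_coreg S_form_def bil_linear pairing_linear)

lemma U_dprec:
  "pairing \<xi> (U (dprec \<zeta> \<eta>)) = pairing \<xi> (pc (U \<zeta>) (U \<eta>)) - S_form \<eta> \<zeta> \<xi> - S_form \<xi> \<zeta> \<eta>"
  unfolding pairing_minus_right pairing_Tr_dual
  using invariant_odot[of \<zeta> "T \<eta>" \<xi>] invariant_odot[of \<zeta> "T \<xi>" \<eta>]
    invariant_odot[of \<eta> "Tr (tau r) \<zeta>" \<xi>] invariant_star[of \<xi> "Tr (tau r) \<zeta>" \<eta>]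
  by (simp (no_asm_use) add: dprec_coreg S_form_def Ts_eq bil_linear pairing_linear)
    algebra

lemma S_tensor_unitv: "S_tensor sc pc r \<alpha> \<beta> \<gamma> = S_form (unitv \<alpha>) (unitv \<beta>) (unitv \<gamma>)"
proof -
  have Tr_unitv: "Tr t (unitv a) = t a" for t :: "'i \<Rightarrow> 'i \<Rightarrow> 'a" and a
    by (rule ext) (simp add: Tr_def unitv_def if_distrib[of "\<lambda>x. x * _"] cong: if_cong)
  have bil_unitv: "bil c (unitv i) (unitv j) k = c i j k" for c i j k
    using pairing_unitv_left[of j "\<lambda>l. c i l k"] by (simp add: bil_unitv_left pairing_def)
  have first: "(\<Sum>q\<in>UNIV. \<Sum>t\<in>UNIV. r \<alpha> q * r \<beta> t * opsum sc pc (unitv t) (unitv q) \<gamma>)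
      = pairing (unitv \<gamma>) (circ (T (unitv \<beta>)) (T (unitv \<alpha>)))"
  proof -
    have "(\<Sum>q\<in>UNIV. \<Sum>t\<in>UNIV. r \<alpha> q * r \<beta> t * opsum sc pc (unitv t) (unitv q) \<gamma>)
        = (\<Sum>t\<in>UNIV. \<Sum>q\<in>UNIV. r \<alpha> q * r \<beta> t * opsum sc pc (unitv t) (unitv q) \<gamma>)"
      by (rule sum.swap)
    then show ?thesis
      unfolding opsum_eq_plus plus_fun_apply bil_unitv
      by (simp add: pairing_unitv_left Tr_unitv bil_apply algebra_simps sum.distrib)
  qed
  have second: "(\<Sum>q\<in>UNIV. \<Sum>s\<in>UNIV. r \<alpha> q * r s \<gamma> * L_odot sc pc (unitv q) (unitv s) \<beta>)
      = pairing (unitv \<beta>) (sc (T (unitv \<alpha>)) (Tr (tau r) (unitv \<gamma>))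
          + pc (Tr (tau r) (unitv \<gamma>)) (T (unitv \<alpha>)))"
  proof -
    have "(\<Sum>q\<in>UNIV. \<Sum>s\<in>UNIV. r \<alpha> q * r s \<gamma> * pc (unitv s) (unitv q) \<beta>)
        = (\<Sum>s\<in>UNIV. \<Sum>q\<in>UNIV. r \<alpha> q * r s \<gamma> * pc (unitv s) (unitv q) \<beta>)"
      by (rule sum.swap)
    then show ?thesis
      unfolding L_odot_def plus_fun_apply bil_unitv
      by (simp add: pairing_unitv_left Tr_unitv tau_def bil_apply algebra_simps sum.distrib)
  qed
  have third: "(\<Sum>p\<in>UNIV. \<Sum>s\<in>UNIV. r p \<beta> * r s \<gamma> * sc (unitv p) (unitv s) \<alpha>)
      = pairing (unitv \<alpha>) (sc (Tr (tau r) (unitv \<beta>)) (Tr (tau r) (unitv \<gamma>)))"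
    unfolding bil_unitv by (simp add: pairing_unitv_left Tr_unitv tau_def bil_apply algebra_simps)
  show ?thesis
    unfolding S_tensor_def S_form_def by (simp only: first second third)
qed

lemma S_form_linear:
  "S_form (x + y) \<eta> \<xi> = S_form x \<eta> \<xi> + S_form y \<eta> \<xi>" "S_form (\<lambda>i. c * x i) \<eta> \<xi> = c * S_form x \<eta> \<xi>"
  "S_form \<zeta> (x + y) \<xi> = S_form \<zeta> x \<xi> + S_form \<zeta> y \<xi>" "S_form \<zeta> (\<lambda>i. c * x i) \<xi> = c * S_form \<zeta> x \<xi>"
  "S_form \<zeta> \<eta> (x + y) = S_form \<zeta> \<eta> x + S_form \<zeta> \<eta> y" "S_form \<zeta> \<eta> (\<lambda>i. c * x i) = c * S_form \<zeta> \<eta> x"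
  by (simp_all add: S_form_def Tr_add bil_linear pairing_linear scale_simps algebra_simps)

lemma S_tensor_zero_iff: "S_tensor sc pc r = (\<lambda>_ _ _. 0) \<longleftrightarrow> (\<forall>\<zeta> \<eta> \<xi>. S_form \<zeta> \<eta> \<xi> = 0)"
proof
  assume "S_tensor sc pc r = (\<lambda>_ _ _. 0)"
  then have units: "S_form (unitv \<alpha>) (unitv \<beta>) (unitv \<gamma>) = 0" for \<alpha> \<beta> \<gamma>
    by (simp add: S_tensor_unitv[symmetric])
  have units2: "S_form (unitv \<alpha>) (unitv \<beta>) \<xi> = 0" for \<alpha> \<beta> \<xi>
    by (rule linear_functional_eq_zero[where f = "S_form (unitv \<alpha>) (unitv \<beta>)"])
      (simp_all add: S_form_linear units)
  have units1: "S_form (unitv \<alpha>) \<eta> \<xi> = 0" for \<alpha> \<eta> \<xi>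
    by (rule linear_functional_eq_zero[where f = "\<lambda>\<eta>. S_form (unitv \<alpha>) \<eta> \<xi>"])
      (simp_all add: S_form_linear units2)
  have "S_form \<zeta> \<eta> \<xi> = 0" for \<zeta> \<eta> \<xi>
    by (rule linear_functional_eq_zero[where f = "\<lambda>\<zeta>. S_form \<zeta> \<eta> \<xi>"])
      (simp_all add: S_form_linear units1)
  then show "\<forall>\<zeta> \<eta> \<xi>. S_form \<zeta> \<eta> \<xi> = 0"
    by blast
next
  assume "\<forall>\<zeta> \<eta> \<xi>. S_form \<zeta> \<eta> \<xi> = 0"
  then show "S_tensor sc pc r = (\<lambda>_ _ _. 0)"
    by (simp add: S_tensor_unitv fun_eq_iff)
qed

lemma S_tensor_zero_if_T_hom:
  assumes hom: "\<And>\<zeta> \<eta>. T (dcirc \<zeta> \<eta>) = circ (T \<zeta>) (T \<eta>)"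
  shows "S_tensor sc pc r = (\<lambda>_ _ _. 0)"
proof -
  have transposed: "pairing (dcirc a b) (Tr (tau r) c) = pairing c (circ (T a) (T b))" for a b c
    using hom[of a b] pairing_Tr[of c r "dcirc a b"] by simp
  have "S_form \<zeta> \<eta> \<xi> = 0" for \<zeta> \<eta> \<xi>
    using transposed[of \<zeta> \<xi> \<eta>] transposed[of \<eta> \<xi> \<zeta>] transposed[of \<xi> \<zeta> \<eta>]
      invariant_odot[of \<eta> "T \<zeta>" \<xi>] invariant_odot[of \<eta> "T \<xi>" \<zeta>]
      invariant_odot[of \<eta> "Tr (tau r) \<zeta>" \<xi>]
    by (simp (no_asm_use) add: dsucc_coreg dprec_coreg S_form_def Ts_eq bil_linear pairing_linear)
      algebra
  then show ?thesis
    using S_tensor_zero_iff by blast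
qed

lemma homs_if_S_tensor_zero:
  assumes "S_tensor sc pc r = (\<lambda>_ _ _. 0)"
  shows "T (dsucc \<zeta> \<eta>) = sc (T \<zeta>) (T \<eta>)" and "T (dprec \<zeta> \<eta>) = pc (T \<zeta>) (T \<eta>)"
    and "U (dsucc \<zeta> \<eta>) = sc (U \<zeta>) (U \<eta>)" and "U (dprec \<zeta> \<eta>) = pc (U \<zeta>) (U \<eta>)"
proof -
  have S_form_zero: "S_form a b c = 0" for a b c
    using assms S_tensor_zero_iff by blast
  show "T (dsucc \<zeta> \<eta>) = sc (T \<zeta>) (T \<eta>)"
    by (rule vector_eqI) (simp add: T_dsucc S_form_zero)
  show "T (dprec \<zeta> \<eta>) = pc (T \<zeta>) (T \<eta>)"
    by (rule vector_eqI) (simp add: T_dprec S_form_zero)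
  show "U (dsucc \<zeta> \<eta>) = sc (U \<zeta>) (U \<eta>)"
    by (rule vector_eqI) (simp add: U_dsucc S_form_zero)
  show "U (dprec \<zeta> \<eta>) = pc (U \<zeta>) (U \<eta>)"
    by (rule vector_eqI) (simp add: U_dprec S_form_zero)
qed

lemma dsucc_add_right: "dsucc \<zeta> (a + b) = dsucc \<zeta> a + dsucc \<zeta> b"
  by (simp add: dsucc_coreg Tr_add actions_linear)

lemma dprec_add_left: "dprec (a + b) \<zeta> = dprec a \<zeta> + dprec b \<zeta>"
  by (simp add: dprec_coreg Tr_add actions_linear)

context
  assumes T_succ: "\<And>\<zeta> \<eta>. T (dsucc \<zeta> \<eta>) = sc (T \<zeta>) (T \<eta>)"
    and T_prec: "\<And>\<zeta> \<eta>. T (dprec \<zeta> \<eta>) = pc (T \<zeta>) (T \<eta>)"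
    and U_succ: "\<And>\<zeta> \<eta>. U (dsucc \<zeta> \<eta>) = sc (U \<zeta>) (U \<eta>)"
    and U_prec: "\<And>\<zeta> \<eta>. U (dprec \<zeta> \<eta>) = pc (U \<zeta>) (U \<eta>)"
begin

lemma T_dcirc: "T (dcirc \<zeta> \<eta>) = circ (T \<zeta>) (T \<eta>)"
  by (simp add: Tr_add T_succ T_prec)

lemma U_dcirc: "U (dcirc \<zeta> \<eta>) = circ (U \<zeta>) (U \<eta>)"
  using U_succ U_prec by (simp add: Tr_add)

lemma dual_ld1: "dsucc (dcirc \<zeta> \<eta>) \<xi> = dsucc \<zeta> (dsucc \<eta> \<xi>) - dsucc \<eta> (dsucc \<zeta> \<xi>)"
proof -
  have lhs: "dsucc (dcirc \<zeta> \<eta>) \<xi> = lsucc (circ (U \<zeta>) (U \<eta>)) \<xi>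
      + rsucc (T \<xi>) (lsucc (U \<zeta>) \<eta> + lprec (U \<zeta>) \<eta>)
      + rsucc (T \<xi>) (rsucc (T \<eta>) \<zeta> + rprec (T \<eta>) \<zeta>)"
    unfolding dsucc_coreg_mixed[of "dcirc \<zeta> \<eta>"] U_dcirc
    by (simp add: dsucc_coreg_mixed dprec_coreg rsucc_linear algebra_simps)
  have rhs: "dsucc a (dsucc b \<xi>)
      = lsucc (U a) (lsucc (U b) \<xi>) + lsucc (U a) (rsucc (T \<xi>) b) + rsucc (sc (T b) (T \<xi>)) a"
    for a b
    unfolding dsucc_coreg_mixed[of a "dsucc b \<xi>"] T_succ
    by (simp add: dsucc_coreg_mixed lsucc_linear)
  note bimodule = coreg_ld1_first[of "T \<xi>" "T \<eta>" \<zeta>] coreg_ld1_second[of "T \<xi>" "U \<zeta>" \<eta>]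
    coreg_ld1_third[of "U \<zeta>" "U \<eta>" \<xi>]
  have residual: "rsucc (sc (Ts \<zeta>) (T \<xi>)) \<eta> = lsucc (Ts \<eta>) (rsucc (T \<xi>) \<zeta>)"
    by (simp add: lsucc_Ts Ts_rsucc)
  show ?thesis (is "?L = ?R")
  proof (rule covector_eqI)
    fix v
    \<comment> \<open>algebra needs an integral domain, so the linear combination is taken after pairing\<close>
    note facts = lhs rhs[of \<zeta> \<eta>] rhs[of \<eta> \<zeta>] bimodule residual
    show "pairing ?L v = pairing ?R v"
      using facts [THEN arg_cong [where f = "\<lambda>\<gamma>. pairing \<gamma> v"]]
      by (simp (no_asm_use) only: Ts_eq bil_linear actions_linear pairing_linear) algebra
  qed
qed

lemma dual_ld2: "dprec \<eta> (dcirc \<zeta> \<xi>) + dprec (dsucc \<zeta> \<eta>) \<xi> = dsucc \<zeta> (dprec \<eta> \<xi>)"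
proof -
  have lhs1: "dprec \<eta> (dcirc \<zeta> \<xi>) = lprec (U \<eta>) (lsucc (U \<zeta>) \<xi> + lprec (U \<zeta>) \<xi>)
      + lprec (U \<eta>) (rsucc (T \<xi>) \<zeta> + rprec (T \<xi>) \<zeta>) + rprec (circ (T \<zeta>) (T \<xi>)) \<eta>"
    unfolding dprec_coreg[of \<eta> "dcirc \<zeta> \<xi>"] T_dcirc
    by (simp add: dsucc_coreg_mixed dprec_coreg lprec_linear algebra_simps)
  have lhs2: "dprec (dsucc \<zeta> \<eta>) \<xi> = lprec (sc (U \<zeta>) (U \<eta>)) \<xi>
      + rprec (T \<xi>) (lsucc (U \<zeta>) \<eta>) + rprec (T \<xi>) (rsucc (T \<eta>) \<zeta>)"
    unfolding dprec_coreg[of "dsucc \<zeta> \<eta>"] U_succ by (simp add: dsucc_coreg_mixed rprec_linear)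
  have rhs: "dsucc \<zeta> (dprec \<eta> \<xi>)
      = lsucc (U \<zeta>) (lprec (U \<eta>) \<xi>) + lsucc (U \<zeta>) (rprec (T \<xi>) \<eta>) + rsucc (pc (T \<eta>) (T \<xi>)) \<zeta>"
    unfolding dsucc_coreg_mixed[of \<zeta> "dprec \<eta> \<xi>"] T_prec by (simp add: dprec_coreg lsucc_linear)
  note bimodule = coreg_ld2_first[of "U \<zeta>" "T \<xi>" \<eta>] coreg_ld2_second[of "T \<eta>" "T \<xi>" \<zeta>]
    coreg_ld2_third[of "U \<eta>" "U \<zeta>" \<xi>]
  have residual: "rprec (circ (Ts \<zeta>) (T \<xi>)) \<eta> = lprec (Ts \<eta>) (rsucc (T \<xi>) \<zeta> + rprec (T \<xi>) \<zeta>)"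
    by (simp add: lprec_Ts Tr_add Ts_rsucc Ts_rprec)
  show ?thesis (is "?L = ?R")
  proof (rule covector_eqI)
    fix v
    note facts = lhs1 lhs2 rhs bimodule residual
    show "pairing ?L v = pairing ?R v"
      using facts [THEN arg_cong [where f = "\<lambda>\<gamma>. pairing \<gamma> v"]]
      by (simp (no_asm_use) only: Ts_eq bil_linear actions_linear pairing_linear) algebra
  qed
qed

lemma dual_ld3: "dprec \<zeta> (dcirc \<eta> \<xi>) = dprec (dprec \<zeta> \<eta>) \<xi> + dsucc \<eta> (dprec \<zeta> \<xi>)"
proof -
  have lhs: "dprec \<zeta> (dcirc \<eta> \<xi>) = lprec (U \<zeta>) (lsucc (U \<eta>) \<xi> + lprec (U \<eta>) \<xi>)
      + lprec (U \<zeta>) (rsucc (T \<xi>) \<eta> + rprec (T \<xi>) \<eta>) + rprec (circ (T \<eta>) (T \<xi>)) \<zeta>"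
    unfolding dprec_coreg[of \<zeta> "dcirc \<eta> \<xi>"] T_dcirc
    by (simp add: dsucc_coreg_mixed dprec_coreg lprec_linear algebra_simps)
  have rhs1: "dprec (dprec \<zeta> \<eta>) \<xi>
      = lprec (pc (U \<zeta>) (U \<eta>)) \<xi> + rprec (T \<xi>) (lprec (U \<zeta>) \<eta>) + rprec (T \<xi>) (rprec (T \<eta>) \<zeta>)"
    unfolding dprec_coreg[of "dprec \<zeta> \<eta>"] U_prec by (simp add: dprec_coreg rprec_linear)
  have rhs2: "dsucc \<eta> (dprec \<zeta> \<xi>)
      = lsucc (U \<eta>) (lprec (U \<zeta>) \<xi>) + lsucc (U \<eta>) (rprec (T \<xi>) \<zeta>) + rsucc (pc (T \<zeta>) (T \<xi>)) \<eta>"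
    unfolding dsucc_coreg_mixed[of \<eta> "dprec \<zeta> \<xi>"] T_prec by (simp add: dprec_coreg lsucc_linear)
  note bimodule = coreg_ld3_first[of "T \<eta>" "T \<xi>" \<zeta>] coreg_ld3_second[of "U \<zeta>" "T \<xi>" \<eta>]
    coreg_ld3_third[of "U \<zeta>" "U \<eta>" \<xi>]
  have residual: "lsucc (Ts \<eta>) (rprec (T \<xi>) \<zeta>) = rsucc (pc (Ts \<zeta>) (T \<xi>)) \<eta>"
    by (simp add: lsucc_Ts Ts_rprec)
  show ?thesis (is "?L = ?R")
  proof (rule covector_eqI)
    fix v
    note facts = lhs rhs1 rhs2 bimodule residual
    show "pairing ?L v = pairing ?R v"
      using facts [THEN arg_cong [where f = "\<lambda>\<gamma>. pairing \<gamma> v"]]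
      by (simp (no_asm_use) only: Ts_eq bil_linear actions_linear pairing_linear) algebra
  qed
qed

lemma leib_dend_dual: "leib_dend dsucc dprec"
  unfolding leib_dend_def opsum_def
  using dual_ld1 dual_ld2 dual_ld3 by (simp add: plus_fun_def fun_diff_def)

end

lemma S_tensor_zero_imp_dual_ld_hom:
  assumes "S_tensor sc pc r = (\<lambda>_ _ _. 0)"
  shows "leib_dend dsucc dprec
    \<and> (\<forall>\<zeta> \<eta>. T (dsucc \<zeta> \<eta>) = sc (T \<zeta>) (T \<eta>)) \<and> (\<forall>\<zeta> \<eta>. T (dprec \<zeta> \<eta>) = pc (T \<zeta>) (T \<eta>))
    \<and> (\<forall>\<zeta> \<eta>. U (dsucc \<zeta> \<eta>) = sc (U \<zeta>) (U \<eta>)) \<and> (\<forall>\<zeta> \<eta>. U (dprec \<zeta> \<eta>) = pc (U \<zeta>) (U \<eta>))"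
proof -
  note homs = homs_if_S_tensor_zero[OF assms]
  show ?thesis
    using leib_dend_dual[OF homs] by (simp add: homs)
qed

lemma dual_ld_hom_imp_dual_leibniz_hom:
  assumes "leib_dend dsucc dprec
    \<and> (\<forall>\<zeta> \<eta>. T (dsucc \<zeta> \<eta>) = sc (T \<zeta>) (T \<eta>)) \<and> (\<forall>\<zeta> \<eta>. T (dprec \<zeta> \<eta>) = pc (T \<zeta>) (T \<eta>))
    \<and> (\<forall>\<zeta> \<eta>. U (dsucc \<zeta> \<eta>) = sc (U \<zeta>) (U \<eta>)) \<and> (\<forall>\<zeta> \<eta>. U (dprec \<zeta> \<eta>) = pc (U \<zeta>) (U \<eta>))"
  shows "leibniz (opsum dsucc dprec)
    \<and> (\<forall>\<zeta> \<eta>. T (dcirc \<zeta> \<eta>) = circ (T \<zeta>) (T \<eta>)) \<and> (\<forall>\<zeta> \<eta>. U (dcirc \<zeta> \<eta>) = circ (U \<zeta>) (U \<eta>))"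
  using leibniz_opsum[OF conjunct1[OF assms] dsucc_add_right dprec_add_left] assms
  by (simp add: Tr_add)

end

theorem mainTheorem8:
  fixes cs cp :: "'i::finite \<Rightarrow> 'i \<Rightarrow> 'i \<Rightarrow> 'a::field"
    and r :: "'i \<Rightarrow> 'i \<Rightarrow> 'a"
  defines "sc \<equiv> bil cs" and "pc \<equiv> bil cp"
  assumes LD: "leib_dend sc pc"
    and inv: "invariant sc pc (\<lambda>p q. r p q + tau r p q)"
  shows "(S_tensor sc pc r = (\<lambda>_ _ _. 0)
          \<longleftrightarrow> (leibniz (opsum (succ_r sc pc r) (prec_r sc pc r)) \<and>
               (\<forall>\<zeta> \<eta>. Tr r (opsum (succ_r sc pc r) (prec_r sc pc r) \<zeta> \<eta>)
                        = opsum sc pc (Tr r \<zeta>) (Tr r \<eta>)) \<and>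
               (\<forall>\<zeta> \<eta>. - Tr (tau r) (opsum (succ_r sc pc r) (prec_r sc pc r) \<zeta> \<eta>)
                        = opsum sc pc (- Tr (tau r) \<zeta>) (- Tr (tau r) \<eta>))))
       \<and> (S_tensor sc pc r = (\<lambda>_ _ _. 0)
          \<longleftrightarrow> (leib_dend (succ_r sc pc r) (prec_r sc pc r) \<and>
               (\<forall>\<zeta> \<eta>. Tr r (succ_r sc pc r \<zeta> \<eta>) = sc (Tr r \<zeta>) (Tr r \<eta>)) \<and>
               (\<forall>\<zeta> \<eta>. Tr r (prec_r sc pc r \<zeta> \<eta>) = pc (Tr r \<zeta>) (Tr r \<eta>)) \<and>
               (\<forall>\<zeta> \<eta>. - Tr (tau r) (succ_r sc pc r \<zeta> \<eta>) = sc (- Tr (tau r) \<zeta>) (- Tr (tau r) \<eta>)) \<and>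
               (\<forall>\<zeta> \<eta>. - Tr (tau r) (prec_r sc pc r \<zeta> \<eta>) = pc (- Tr (tau r) \<zeta>) (- Tr (tau r) \<eta>))))"
proof -
  interpret ld_r_matrix cs cp r
    using LD inv unfolding sc_def pc_def by unfold_locales
  show ?thesis
    using S_tensor_zero_imp_dual_ld_hom dual_ld_hom_imp_dual_leibniz_hom S_tensor_zero_if_T_hom
    unfolding sc_def pc_def opsum_eq_plus by blast
qed

end
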